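(* Let $\mathbb{F}\in\{\mathbb{R},\mathbb{C}\}$, let $n\geq 1$, and equip $M_n(\mathbb{F})$ with a norm $\|\cdot\|$. Let $f,g\colon GL_n(\mathbb{F})\to GL_n(\mathbb{F})$ be mappings, at least one of which is open (with respect to the topology of $GL_n(\mathbb{F})$ as a subspace of $M_n(\mathbb{F})$). Let $A,B\in M_n(\mathbb{F})$. Then for every $\varepsilon>0$ there exist invertible matrices $A_\varepsilon,B_\varepsilon\in GL_n(\mathbb{F})$, each with a simple spectrum, such that $\|A-A_\varepsilon\|<\varepsilon$, $\|B-B_\varepsilon\|<\varepsilon$, and the product $f(A_\varepsilon)g(B_\varepsilon)$ has a simple spectrum.
   Context: $M_n(\mathbb{F})$ is the space of $n\times n$ matrices over $\mathbb{F}$ and $GL_n(\mathbb{F})$ the group of invertible ones; all norms on $M_n(\mathbb{F})$ induce the same topology. A matrix has a simple spectrum if all its eigenvalues (the roots in $\mathbb{C}$ of its characteristic polynomial) have algebraic multiplicity one, i.e. are pairwise distinct. A mapping is open if it sends open sets to open sets. The mappings $f,g$ are not assumed to be continuous or homomorphisms. *)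

theory Defs
  imports "HOL-Analysis.Analysis" "HOL-Computational_Algebra.Polynomial"
begin

definition charpoly :: "'a::comm_ring_1^'n^'n \<Rightarrow> 'a poly" where
  "charpoly A = det (\<chi> i j. (if i = j then [:0, 1:] else 0) - [:A $ i $ j:])"

text \<open>Entries are embedded into the
  complex numbers via emb (complex_of_real for real matrices, id for complex).\<close>
definition simple_spectrum :: "('a::comm_ring_1 \<Rightarrow> complex) \<Rightarrow> 'a^'n^'n \<Rightarrow> bool" where
  "simple_spectrum emb A \<longleftrightarrow>
     (let p = charpoly (\<chi> i j. emb (A $ i $ j)) in
       \<forall>z. poly p z = 0 \<longrightarrow> order z p = 1)"

definition is_matrix_norm :: "('a::real_normed_field^'n^'n \<Rightarrow> real) \<Rightarrow> bool" where
  "is_matrix_norm N \<longleftrightarrow>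
     (\<forall>A. 0 \<le> N A) \<and> (\<forall>A. N A = 0 \<longleftrightarrow> A = 0) \<and>
     (\<forall>A B. N (A + B) \<le> N A + N B) \<and>
     (\<forall>c A. N (\<chi> i j. c * A $ i $ j) = norm c * N A)"

definition GL :: "('a::semiring_1^'n^'n) set" where
  "GL = {A. invertible A}"

definition maps_GL :: "('a::semiring_1^'n^'n \<Rightarrow> 'a^'n^'n) \<Rightarrow> bool" where
  "maps_GL f \<longleftrightarrow> f ` GL \<subseteq> GL"

definition open_on_GL :: "('a::{semiring_1,topological_space}^'n^'n \<Rightarrow> 'a^'n^'n) \<Rightarrow> bool" where
  "open_on_GL f \<longleftrightarrow>
     (\<forall>U. openin (top_of_set GL) U \<longrightarrow> openin (top_of_set GL) (f ` U))"

end

theory Submission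
  imports Defs "HOL-Computational_Algebra.Fundamental_Theorem_Algebra"
begin

text \<open>The matrices X with det X \<noteq> 0 whose characteristic polynomial is coprime to its
  derivative form the non-vanishing set S of a single polynomial in the entries of X, namely a
  Sylvester determinant of the characteristic polynomial and its derivative, times det X. This
  polynomial does not vanish at a diagonal matrix with distinct entries, so S is open and dense.
  If, say, f is open, choose B' \<in> S close to B: right multiplication by the invertible matrix
  g B' is a homeomorphism, so the preimage of S under it is dense and hence meets the non-empty
  set f ` (S \<inter> U), U a small ball around A, which is open in GL; this yields A'.\<close>

section \<open>Complex-valued polynomial functions\<close>

definition complex_polynomial_function :: "('v::real_normed_vector \<Rightarrow> complex) \<Rightarrow> bool" where
  "complex_polynomial_function f \<longleftrightarrow>
     real_polynomial_function (\<lambda>x. Re (f x)) \<and> real_polynomial_function (\<lambda>x. Im (f x))"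

lemma complex_polynomial_function_const [iff]: "complex_polynomial_function (\<lambda>x. c)"
  by (simp add: complex_polynomial_function_def real_polynomial_function.intros(2))

lemma complex_polynomial_function_add [intro]:
  "complex_polynomial_function f \<Longrightarrow> complex_polynomial_function g \<Longrightarrow>
   complex_polynomial_function (\<lambda>x. f x + g x)"
  by (auto simp: complex_polynomial_function_def)

lemma complex_polynomial_function_diff [intro]:
  "complex_polynomial_function f \<Longrightarrow> complex_polynomial_function g \<Longrightarrow>
   complex_polynomial_function (\<lambda>x. f x - g x)"
  by (auto simp: complex_polynomial_function_def)

lemma complex_polynomial_function_mult [intro]:
  "complex_polynomial_function f \<Longrightarrow> complex_polynomial_function g \<Longrightarrow>
   complex_polynomial_function (\<lambda>x. f x * g x)"
  by (auto simp: complex_polynomial_function_def)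

lemma complex_polynomial_function_sum [intro]:
  "(\<And>i. i \<in> I \<Longrightarrow> complex_polynomial_function (\<lambda>x. f x i)) \<Longrightarrow>
   complex_polynomial_function (\<lambda>x. \<Sum>i\<in>I. f x i)"
  by (induct I rule: infinite_finite_induct) auto

lemma complex_polynomial_function_prod [intro]:
  "(\<And>i. i \<in> I \<Longrightarrow> complex_polynomial_function (\<lambda>x. f x i)) \<Longrightarrow>
   complex_polynomial_function (\<lambda>x. \<Prod>i\<in>I. f x i)"
  by (induct I rule: infinite_finite_induct) auto

lemma complex_polynomial_function_bounded_linear:
  "bounded_linear f \<Longrightarrow> complex_polynomial_function f"
  by (auto simp: complex_polynomial_function_def
      intro!: bounded_linear_compose[OF bounded_linear_Re]
        bounded_linear_compose[OF bounded_linear_Im])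

lemma continuous_on_complex_polynomial_function:
  assumes "complex_polynomial_function f"
  shows "continuous_on S f"
proof -
  have "polynomial_function f"
    using assms by (auto simp: polynomial_function_iff_Basis_inner complex_polynomial_function_def
        Basis_complex_def inner_complex_def)
  then show ?thesis by (rule continuous_on_polymonial_function)
qed

text \<open>Restrict to the line through the centre of the ball and x: a real polynomial in one
  variable vanishing on an interval has only zero coefficients.\<close>
lemma real_polynomial_function_zero_on_ball:
  fixes h :: "'v::real_normed_vector \<Rightarrow> real"
  assumes "real_polynomial_function h" "r > 0" "\<And>y. y \<in> ball a r \<Longrightarrow> h y = 0"
  shows "h x = 0"
proof -
  have npos: "norm (x - a) + 1 > 0" by (simp add: add_nonneg_pos)
  define d where "d = r / (norm (x - a) + 1)"
  have d: "d > 0" using assms(2) npos by (simp add: d_def)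
  have in_ball: "a + t *\<^sub>R (x - a) \<in> ball a r" if "\<bar>t\<bar> < d" for t
  proof -
    have "\<bar>t\<bar> * norm (x - a) \<le> \<bar>t\<bar> * (norm (x - a) + 1)" by (simp add: mult_left_mono)
    also have "\<dots> < d * (norm (x - a) + 1)"
      using that npos by (intro mult_strict_right_mono) auto
    also have "\<dots> = r" using npos by (simp add: d_def)
    finally show ?thesis by (simp add: dist_norm)
  qed
  have "polynomial_function (\<lambda>t. a + t *\<^sub>R (x - a))"
    by (intro polynomial_function_add polynomial_function_mult) auto
  then have "real_polynomial_function (\<lambda>t. h (a + t *\<^sub>R (x - a)))"
    using real_polynomial_function_compose[of "\<lambda>t. a + t *\<^sub>R (x - a)" h] assms(1)
    by (auto simp: o_def)
  then obtain c m where "(\<lambda>t. h (a + t *\<^sub>R (x - a))) = (\<lambda>t. \<Sum>i\<le>m. c i * t ^ i)"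
    using real_polynomial_function_imp_sum by blast
  then have c: "\<And>t. h (a + t *\<^sub>R (x - a)) = (\<Sum>i\<le>m. c i * t ^ i)"
    by (simp add: fun_eq_iff)
  have "{-d<..<d} \<subseteq> {t. (\<Sum>i\<le>m. c i * t ^ i) = 0}"
    using in_ball assms(3) by (auto simp flip: c)
  moreover have "infinite {-d<..<d}" using d by (simp add: infinite_Ioo)
  ultimately have "infinite {t. (\<Sum>i\<le>m. c i * t ^ i) = 0}"
    using finite_subset by blast
  then have "\<forall>i\<le>m. c i = 0"
    using polyfun_finite_roots[of c m] by auto
  then show ?thesis using c[of 1] by simp
qed

lemma complex_polynomial_function_zero_on_ball:
  assumes "complex_polynomial_function Q" "r > 0" "\<And>y. y \<in> ball a r \<Longrightarrow> Q y = 0"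
  shows "Q x = 0"
  using real_polynomial_function_zero_on_ball[of "\<lambda>x. Re (Q x)" r a x]
    real_polynomial_function_zero_on_ball[of "\<lambda>x. Im (Q x)" r a x] assms
  by (auto simp: complex_polynomial_function_def complex_eq_iff)

lemma closure_eq_UNIV_iff: "closure S = UNIV \<longleftrightarrow> (\<forall>W. open W \<longrightarrow> W \<noteq> {} \<longrightarrow> W \<inter> S \<noteq> {})"
proof
  assume "closure S = UNIV"
  then show "\<forall>W. open W \<longrightarrow> W \<noteq> {} \<longrightarrow> W \<inter> S \<noteq> {}"
    using open_Int_closure_eq_empty by fastforce
next
  assume meets: "\<forall>W. open W \<longrightarrow> W \<noteq> {} \<longrightarrow> W \<inter> S \<noteq> {}"
  show "closure S = UNIV"
  proof (rule ccontr)
    assume "closure S \<noteq> UNIV"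
    then have "- closure S \<noteq> {}" by blast
    moreover have "- closure S \<inter> S = {}" using closure_subset by blast
    ultimately show False using meets by blast
  qed
qed

lemma dense_complex_polynomial_function_nonzero:
  assumes "complex_polynomial_function Q" "Q x \<noteq> 0"
  shows "closure {y. Q y \<noteq> 0} = UNIV"
  unfolding closure_eq_UNIV_iff
proof (intro allI impI notI)
  fix W assume "open W" "W \<noteq> {}" "W \<inter> {y. Q y \<noteq> 0} = {}"
  then obtain a r where "r > 0" "ball a r \<subseteq> W"
    using open_contains_ball by blast
  then have "Q x = 0"
    using \<open>W \<inter> {y. Q y \<noteq> 0} = {}\<close> complex_polynomial_function_zero_on_ball[OF assms(1) \<open>r > 0\<close>]
    by blast
  with assms(2) show False by simp
qed

definition polynomial_function_coeffs :: "('v::real_normed_vector \<Rightarrow> complex poly) \<Rightarrow> bool" where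
  "polynomial_function_coeffs F \<longleftrightarrow> (\<forall>k. complex_polynomial_function (\<lambda>x. coeff (F x) k))"

lemma polynomial_function_coeffs_const [iff]: "polynomial_function_coeffs (\<lambda>x. p)"
  by (simp add: polynomial_function_coeffs_def)

lemma polynomial_function_coeffs_pCons [intro]:
  assumes "complex_polynomial_function c" "polynomial_function_coeffs F"
  shows "polynomial_function_coeffs (\<lambda>x. pCons (c x) (F x))"
proof -
  have "complex_polynomial_function (\<lambda>x. coeff (pCons (c x) (F x)) k)" for k
    using assms by (cases k) (simp_all add: polynomial_function_coeffs_def)
  then show ?thesis by (simp add: polynomial_function_coeffs_def)
qed

lemma polynomial_function_coeffs_diff [intro]:
  "polynomial_function_coeffs F \<Longrightarrow> polynomial_function_coeffs G \<Longrightarrow>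
   polynomial_function_coeffs (\<lambda>x. F x - G x)"
  unfolding polynomial_function_coeffs_def by auto

lemma polynomial_function_coeffs_mult [intro]:
  "polynomial_function_coeffs F \<Longrightarrow> polynomial_function_coeffs G \<Longrightarrow>
   polynomial_function_coeffs (\<lambda>x. F x * G x)"
  unfolding polynomial_function_coeffs_def coeff_mult
  by (intro allI complex_polynomial_function_sum complex_polynomial_function_mult) auto

lemma polynomial_function_coeffs_sum [intro]:
  "(\<And>i. i \<in> I \<Longrightarrow> polynomial_function_coeffs (\<lambda>x. F x i)) \<Longrightarrow>
   polynomial_function_coeffs (\<lambda>x. \<Sum>i\<in>I. F x i)"
  unfolding polynomial_function_coeffs_def coeff_sum by auto

lemma polynomial_function_coeffs_prod [intro]:
  "(\<And>i. i \<in> I \<Longrightarrow> polynomial_function_coeffs (\<lambda>x. F x i)) \<Longrightarrow>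
   polynomial_function_coeffs (\<lambda>x. \<Prod>i\<in>I. F x i)"
  by (induct I rule: infinite_finite_induct) auto

lemma polynomial_function_coeffs_pderiv [intro]:
  "polynomial_function_coeffs F \<Longrightarrow> polynomial_function_coeffs (\<lambda>x. pderiv (F x))"
  unfolding polynomial_function_coeffs_def coeff_pderiv by auto

lemma complex_polynomial_function_det:
  fixes M :: "'v::real_normed_vector \<Rightarrow> complex^'n::finite^'n"
  assumes "\<And>i j. complex_polynomial_function (\<lambda>x. M x $ i $ j)"
  shows "complex_polynomial_function (\<lambda>x. det (M x))"
  unfolding det_def
  by (intro complex_polynomial_function_sum complex_polynomial_function_mult
      complex_polynomial_function_prod complex_polynomial_function_const assms)

lemma polynomial_function_coeffs_charpoly:
  fixes M :: "'v::real_normed_vector \<Rightarrow> complex^'n::finite^'n"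
  assumes "\<And>i j. complex_polynomial_function (\<lambda>x. M x $ i $ j)"
  shows "polynomial_function_coeffs (\<lambda>x. charpoly (M x))"
  unfolding charpoly_def det_def vec_lambda_beta
  by (intro polynomial_function_coeffs_sum polynomial_function_coeffs_mult
      polynomial_function_coeffs_prod polynomial_function_coeffs_diff polynomial_function_coeffs_pCons
      polynomial_function_coeffs_const assms)

lemma degree_charpoly_le: "degree (charpoly (A::'a::comm_ring_1^'n::finite^'n)) \<le> CARD('n)"
proof -
  define X where "X = (\<chi> i j. (if i = j then [:0, 1:] else 0) - [:A $ i $ j:])"
  have "degree (X $ i $ j) \<le> 1" for i j
    unfolding X_def by (auto intro: order.trans[OF degree_diff_le])
  then have "degree (\<Prod>i\<in>UNIV. X $ i $ \<sigma> i) \<le> CARD('n)" for \<sigma>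
    using degree_prod_sum_le[of UNIV "\<lambda>i. X $ i $ \<sigma> i"] sum_mono[of UNIV "\<lambda>i. degree (X $ i $ \<sigma> i)" "\<lambda>_. 1"]
    by (simp add: o_def)
  then have "degree (of_int (sign \<sigma>) * (\<Prod>i\<in>UNIV. X $ i $ \<sigma> i)) \<le> CARD('n)" for \<sigma>
    by (intro order.trans[OF degree_mult_le]) simp
  then have "degree (det X) \<le> CARD('n)"
    unfolding det_def by (intro degree_sum_le) auto
  then show ?thesis by (simp add: charpoly_def X_def)
qed

section \<open>A Sylvester matrix of a polynomial and its derivative\<close>

definition sylvester_index :: "('n::finite \<Rightarrow> nat) \<Rightarrow> 'n + 'n \<Rightarrow> nat" where
  "sylvester_index e c = (case c of Inl i \<Rightarrow> e i | Inr i \<Rightarrow> CARD('n) + e i)"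

definition sylvester_row :: "('n \<Rightarrow> nat) \<Rightarrow> 'a::idom poly \<Rightarrow> 'n + 'n \<Rightarrow> 'a poly" where
  "sylvester_row e p r = (case r of Inl i \<Rightarrow> monom 1 (e i) * p | Inr i \<Rightarrow> monom 1 (e i) * pderiv p)"

text \<open>When e enumerates 'n as 0, ..., n-1 and p has degree at most n, column r lists the
  coefficients of x^(e i) p or x^(e i) p' in degrees below 2n: a (square, transposed) Sylvester
  matrix of p and p'.\<close>
definition sylvester_matrix :: "('n::finite \<Rightarrow> nat) \<Rightarrow> 'a::idom poly \<Rightarrow> 'a^('n + 'n)^('n + 'n)" where
  "sylvester_matrix e p = (\<chi> c r. coeff (sylvester_row e p r) (sylvester_index e c))"

definition index_poly :: "('n::finite \<Rightarrow> nat) \<Rightarrow> ('n \<Rightarrow> 'a::comm_monoid_add) \<Rightarrow> 'a poly" where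
  "index_poly e a = (\<Sum>i\<in>UNIV. monom (a i) (e i))"

lemma bij_betw_sylvester_index:
  assumes e: "bij_betw e (UNIV::'n::finite set) {0..<CARD('n)}"
  shows "bij_betw (sylvester_index e) UNIV {0..<2 * CARD('n)}"
proof -
  have lt: "e i < CARD('n)" for i using e by (auto simp: bij_betw_def)
  have "sylvester_index e ` UNIV = {0..<2 * CARD('n)}"
  proof (intro equalityI subsetI)
    fix k assume "k \<in> sylvester_index e ` UNIV"
    then obtain c where k: "k = sylvester_index e c" by blast
    show "k \<in> {0..<2 * CARD('n)}"
    proof (cases c)
      case (Inl i) with lt[of i] k show ?thesis by (simp add: sylvester_index_def)
    next
      case (Inr i) with lt[of i] k show ?thesis by (simp add: sylvester_index_def)
    qed
  next
    fix k assume k: "k \<in> {0..<2 * CARD('n)}"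
    show "k \<in> sylvester_index e ` UNIV"
    proof (cases "k < CARD('n)")
      case True
      then have "k \<in> e ` UNIV" using e by (simp add: bij_betw_def)
      then obtain i where "e i = k" by (metis imageE)
      then have "sylvester_index e (Inl i) = k" by (simp add: sylvester_index_def)
      then show ?thesis by (metis rangeI)
    next
      case False
      then have "k - CARD('n) \<in> e ` UNIV" using e k by (auto simp: bij_betw_def)
      then obtain i where "e i = k - CARD('n)" by (metis imageE)
      then have "sylvester_index e (Inr i) = k" using False by (simp add: sylvester_index_def)
      then show ?thesis by (metis rangeI)
    qed
  qed
  then show ?thesis by (simp add: bij_betw_def inj_on_iff_eq_card)
qed

lemma coeff_index_poly:
  assumes "inj e"
  shows "coeff (index_poly e a) (e i) = a i"
proof -
  have "coeff (index_poly e a) (e i) = (\<Sum>j\<in>UNIV. if j = i then a j else 0)"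
    unfolding index_poly_def coeff_sum coeff_monom by (intro sum.cong) (auto dest: injD[OF assms])
  then show ?thesis by simp
qed

lemma degree_index_poly_less:
  assumes e: "bij_betw e (UNIV::'n::finite set) {0..<CARD('n)}"
  shows "degree (index_poly e a) < CARD('n)"
proof (rule degree_lessI)
  have "e i < CARD('n)" for i using e by (auto simp: bij_betw_def)
  then show "\<forall>k\<ge>CARD('n). coeff (index_poly e a) k = 0"
    by (auto simp: index_poly_def coeff_sum intro!: sum.neutral) (metis not_le)
qed simp

lemma degree_sylvester_row_less:
  fixes p :: "'a::{idom,semiring_char_0} poly"
  assumes e: "bij_betw e (UNIV::'n::finite set) {0..<CARD('n)}"
    and deg: "degree p \<le> CARD('n)"
  shows "degree (sylvester_row e p r) < 2 * CARD('n)"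
proof -
  have shift: "degree (monom 1 (e i) * q) < 2 * CARD('n)" if "degree q \<le> CARD('n)" for i and q :: "'a poly"
  proof -
    have "degree (monom 1 (e i) * q) \<le> e i + degree q"
      by (rule order.trans[OF degree_mult_le]) (simp add: degree_monom_le)
    moreover have "e i < CARD('n)" using e by (auto simp: bij_betw_def)
    ultimately show ?thesis using that by linarith
  qed
  then show ?thesis
    using deg by (cases r) (auto simp: sylvester_row_def degree_pderiv intro!: shift)
qed

lemma sum_sylvester_row:
  "(\<Sum>r\<in>UNIV. smult (y $ r) (sylvester_row e p r)) =
     index_poly e (\<lambda>i. y $ Inl i) * p + index_poly e (\<lambda>i. y $ Inr i) * pderiv p"
  unfolding UNIV_Plus_UNIV[symmetric] sum.Plus[OF finite finite] index_poly_def
  by (simp add: sylvester_row_def sum_distrib_right smult_monom flip: mult_smult_left)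

lemma sylvester_matrix_kernel:
  fixes p :: "'a::{idom,semiring_char_0} poly"
  assumes e: "bij_betw e (UNIV::'n::finite set) {0..<CARD('n)}"
    and deg: "degree p \<le> CARD('n)" and y: "sylvester_matrix e p *v y = 0"
  shows "index_poly e (\<lambda>i. y $ Inl i) * p + index_poly e (\<lambda>i. y $ Inr i) * pderiv p = 0"
proof -
  have "coeff (\<Sum>r\<in>UNIV. smult (y $ r) (sylvester_row e p r)) k = 0" for k
  proof (cases "k < 2 * CARD('n)")
    case True
    then obtain c where "k = sylvester_index e c"
      using bij_betw_sylvester_index[OF e] by (force simp: bij_betw_def)
    then show ?thesis using y
      by (simp add: coeff_sum vec_eq_iff matrix_vector_mult_def sylvester_matrix_def mult.commute)
  next
    case False
    then have "coeff (sylvester_row e p r) k = 0" for r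
      using degree_sylvester_row_less[OF e deg, of r] by (intro coeff_eq_0) linarith
    then show ?thesis by (simp add: coeff_sum)
  qed
  then show ?thesis by (simp flip: sum_sylvester_row add: poly_eq_iff)
qed

lemma transpose_sylvester_matrix_mult_powers:
  fixes p :: "'a::{idom,semiring_char_0} poly"
  assumes e: "bij_betw e (UNIV::'n::finite set) {0..<CARD('n)}"
    and deg: "degree p \<le> CARD('n)"
  shows "transpose (sylvester_matrix e p) *v (\<chi> c. z ^ sylvester_index e c) =
         (\<chi> r. poly (sylvester_row e p r) z)"
proof -
  have "(\<Sum>c\<in>UNIV. coeff P (sylvester_index e c) * z ^ sylvester_index e c) = poly P z"
    if "degree P < 2 * CARD('n)" for P
  proof -
    have "(\<Sum>c\<in>UNIV. coeff P (sylvester_index e c) * z ^ sylvester_index e c)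
        = (\<Sum>k\<in>{0..<2 * CARD('n)}. coeff P k * z ^ k)"
      using sum.reindex_bij_betw[OF bij_betw_sylvester_index[OF e], of "\<lambda>k. coeff P k * z ^ k"]
      by simp
    also have "\<dots> = (\<Sum>k\<le>degree P. coeff P k * z ^ k)"
      using that by (intro sum.mono_neutral_right) (auto simp: coeff_eq_0)
    finally show ?thesis by (simp add: poly_altdef)
  qed
  then show ?thesis
    using degree_sylvester_row_less[OF e deg]
    by (simp add: vec_eq_iff matrix_vector_mult_def transpose_def sylvester_matrix_def)
qed

lemma det_nonzero_iff_kernel_trivial:
  fixes A :: "'a::field^'n::finite^'n"
  shows "det A \<noteq> 0 \<longleftrightarrow> (\<forall>x. A *v x = 0 \<longrightarrow> x = 0)"
  by (simp add: invertible_det_nz[symmetric] invertible_left_inverse matrix_left_invertible_ker)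

lemma rsquarefree_if_det_sylvester_matrix_nonzero:
  fixes p :: "'a::field_char_0 poly"
  assumes e: "bij_betw e (UNIV::'n::finite set) {0..<CARD('n)}"
    and deg: "degree p \<le> CARD('n)" and det: "det (sylvester_matrix e p) \<noteq> 0"
  shows "rsquarefree p"
  unfolding rsquarefree_roots
proof (intro allI notI)
  fix z assume z: "poly p z = 0 \<and> poly (pderiv p) z = 0"
  have "0 \<in> e ` UNIV" using e by (simp add: bij_betw_def)
  then obtain i0 where i0: "e i0 = 0" by (metis imageE)
  have "transpose (sylvester_matrix e p) *v (\<chi> c. z ^ sylvester_index e c) = 0"
    using z by (simp only: transpose_sylvester_matrix_mult_powers[OF e deg])
      (simp add: vec_eq_iff sylvester_row_def poly_monom split: sum.split)
  moreover have "det (transpose (sylvester_matrix e p)) \<noteq> 0"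
    using det by simp
  ultimately have "(\<chi> c. z ^ sylvester_index e c) = 0"
    using det_nonzero_iff_kernel_trivial by blast
  then have "z ^ sylvester_index e (Inl i0) = 0"
    by (metis vec_lambda_beta zero_index)
  then show False using i0 by (simp add: sylvester_index_def)
qed

lemma card_roots_rsquarefree:
  fixes p :: "complex poly"
  assumes "rsquarefree p"
  shows "card {z. poly p z = 0} = degree p"
proof -
  have "p \<noteq> 0" using assms by (simp add: rsquarefree_def)
  then have "degree p = degree (\<Prod>z | poly p z = 0. [:-z, 1:])"
    by (metis complex_poly_decompose_rsquarefree[OF assms] degree_smult_eq leading_coeff_0_iff)
  also have "\<dots> = card {z. poly p z = 0}"
    by (subst degree_prod_eq_sum_degree) auto
  finally show ?thesis ..
qed

lemma det_sylvester_matrix_nonzero_if_rsquarefree: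
  fixes p :: "complex poly"
  assumes e: "bij_betw e (UNIV::'n::finite set) {0..<CARD('n)}"
    and sf: "rsquarefree p" and deg: "degree p = CARD('n)"
  shows "det (sylvester_matrix e p) \<noteq> 0"
  unfolding det_nonzero_iff_kernel_trivial
proof (intro allI impI)
  fix y assume y: "sylvester_matrix e p *v y = 0"
  define u where "u = index_poly e (\<lambda>i. y $ Inl i)"
  define v where "v = index_poly e (\<lambda>i. y $ Inr i)"
  have uv: "u * p + v * pderiv p = 0"
    unfolding u_def v_def using sylvester_matrix_kernel[OF e _ y] deg by simp
  have p: "p \<noteq> 0" using sf by (simp add: rsquarefree_def)
  \<comment> \<open>v vanishes at the n distinct roots of p but has degree below n.\<close>
  have "v = 0"
  proof (rule ccontr)
    assume "v \<noteq> 0"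
    have "{z. poly p z = 0} \<subseteq> {z. poly v z = 0}"
    proof
      fix z assume "z \<in> {z. poly p z = 0}"
      moreover from this have "poly (pderiv p) z \<noteq> 0" using sf by (simp add: rsquarefree_roots)
      moreover have "poly (u * p + v * pderiv p) z = 0" using uv by simp
      ultimately show "z \<in> {z. poly v z = 0}" by simp
    qed
    then have "card {z. poly p z = 0} \<le> card {z. poly v z = 0}"
      using poly_roots_finite[OF \<open>v \<noteq> 0\<close>] by (rule card_mono[rotated])
    also have "\<dots> \<le> degree v" using \<open>v \<noteq> 0\<close> by (rule card_poly_roots_bound)
    also have "\<dots> < CARD('n)" unfolding v_def by (rule degree_index_poly_less[OF e])
    finally show False using card_roots_rsquarefree[OF sf] deg by simp
  qed
  with uv p have "u = 0" by simp
  have "inj e" using e by (simp add: bij_betw_def)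
  have y0: "y $ Inl i = 0" "y $ Inr i = 0" for i
    using coeff_index_poly[OF \<open>inj e\<close>, of "\<lambda>i. y $ Inl i" i]
      coeff_index_poly[OF \<open>inj e\<close>, of "\<lambda>i. y $ Inr i" i] \<open>u = 0\<close> \<open>v = 0\<close>
    by (simp_all add: u_def v_def)
  show "y = 0"
    unfolding vec_eq_iff
  proof
    fix r show "y $ r = 0 $ r" using y0 by (cases r) simp_all
  qed
qed

lemma rsquarefree_prod_linear:
  fixes x :: "'n::finite \<Rightarrow> 'a::field_char_0"
  assumes "inj x"
  shows "rsquarefree (\<Prod>i\<in>UNIV. [:- x i, 1:])"
  unfolding rsquarefree_roots
proof (intro allI notI)
  fix a assume a: "poly (\<Prod>i\<in>UNIV. [:- x i, 1:]) a = 0 \<and> poly (pderiv (\<Prod>i\<in>UNIV. [:- x i, 1:])) a = 0"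
  then obtain i where i: "a = x i" by (auto simp: poly_prod)
  define R where "R = (\<Prod>j\<in>UNIV - {i}. [:- x j, 1:])"
  have "(\<Prod>j\<in>UNIV. [:- x j, 1:]) = [:- x i, 1:] * R"
    unfolding R_def by (rule prod.remove) auto
  moreover have "pderiv ([:- x i, 1:] * R) = [:- x i, 1:] * pderiv R + R"
    by (simp only: pderiv_mult) (simp add: pderiv_pCons)
  ultimately have "poly (pderiv (\<Prod>j\<in>UNIV. [:- x j, 1:])) a = poly R (x i)"
    by (simp only: poly_add poly_mult) (simp add: i)
  also have "\<dots> = (\<Prod>j\<in>UNIV - {i}. x i - x j)" by (simp add: R_def poly_prod)
  also have "\<dots> \<noteq> 0"
    using assms by (auto simp: inj_eq)
  finally show False using a by simp
qed

section \<open>Invertible matrices with simple spectrum are generic\<close>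

lemma simple_spectrum_if_rsquarefree:
  assumes "rsquarefree (charpoly (map_matrix emb A))"
  shows "simple_spectrum emb A"
proof -
  have "charpoly (map_matrix emb A) \<noteq> 0" using assms by (simp add: rsquarefree_def)
  with assms show ?thesis
    unfolding simple_spectrum_def Let_def map_matrix_def[symmetric]
    by (simp add: rsquarefree_root_order)
qed

locale complex_embedding =
  fixes emb :: "'a::{real_normed_field, euclidean_space} \<Rightarrow> complex"
  assumes bounded_linear_emb: "bounded_linear emb"
    and hom_mult: "emb (x * y) = emb x * emb y"
    and hom_one: "emb 1 = 1"
begin

lemma hom_0 [simp]: "emb 0 = 0"
  using bounded_linear_emb by (simp add: linear_simps)

lemma hom_add [simp]: "emb (x + y) = emb x + emb y"
  using bounded_linear_emb by (simp add: linear_simps)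

lemma hom_sum: "emb (sum f S) = (\<Sum>x\<in>S. emb (f x))"
  using linear_sum[OF bounded_linear.linear[OF bounded_linear_emb]] .

lemma hom_prod: "emb (prod f S) = (\<Prod>x\<in>S. emb (f x))"
  by (induct S rule: infinite_finite_induct) (simp_all add: hom_one hom_mult)

lemma hom_of_int [simp]: "emb (of_int k) = of_int k"
proof -
  have "emb (of_int k) = emb (real_of_int k *\<^sub>R 1)"
    by (simp add: scaleR_conv_of_real)
  also have "\<dots> = real_of_int k *\<^sub>R 1"
    using bounded_linear_emb by (simp add: linear_simps hom_one)
  finally show ?thesis by (simp add: scaleR_conv_of_real)
qed

lemma hom_of_nat [simp]: "emb (of_nat k) = of_nat k"
  using hom_of_int[of "int k"] by simp

lemma det_map_matrix: "det (map_matrix emb A) = emb (det A)"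
  unfolding det_def by (simp add: hom_sum hom_prod hom_mult)

lemma complex_polynomial_function_entry:
  "complex_polynomial_function (\<lambda>A. emb (A $ i $ j))"
  by (intro complex_polynomial_function_bounded_linear bounded_linear_compose[OF bounded_linear_emb]
      bounded_linear_compose[OF bounded_linear_vec_nth bounded_linear_vec_nth])

text \<open>Up to sign, the discriminant of the characteristic polynomial times the determinant.\<close>
definition genericity_poly :: "('n::finite \<Rightarrow> nat) \<Rightarrow> 'a^'n^'n \<Rightarrow> complex" where
  "genericity_poly e A =
     det (sylvester_matrix e (charpoly (map_matrix emb A))) * det (map_matrix emb A)"

lemma complex_polynomial_function_genericity_poly:
  fixes e :: "'n::finite \<Rightarrow> nat"
  shows "complex_polynomial_function (genericity_poly e)"
proof -
  have "polynomial_function_coeffs (\<lambda>A::'a^'n^'n. charpoly (map_matrix emb A))"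
    by (rule polynomial_function_coeffs_charpoly) (simp add: complex_polynomial_function_entry)
  then have "polynomial_function_coeffs
      (\<lambda>A::'a^'n^'n. sylvester_row e (charpoly (map_matrix emb A)) r)" for r
    by (cases r) (auto simp: sylvester_row_def)
  then have "complex_polynomial_function
      (\<lambda>A::'a^'n^'n. sylvester_matrix e (charpoly (map_matrix emb A)) $ c $ r)" for c r
    by (simp add: sylvester_matrix_def polynomial_function_coeffs_def)
  then show ?thesis
    unfolding genericity_poly_def[abs_def]
    by (intro complex_polynomial_function_mult complex_polynomial_function_det)
      (simp_all add: complex_polynomial_function_entry)
qed

lemma invertible_simple_spectrum_if_genericity_poly_nonzero:
  fixes A :: "'a^'n::finite^'n"
  assumes e: "bij_betw e (UNIV::'n set) {0..<CARD('n)}"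
    and nz: "genericity_poly e A \<noteq> 0"
  shows "invertible A" "simple_spectrum emb A"
proof -
  have "det (map_matrix emb A) \<noteq> 0" using nz by (simp add: genericity_poly_def)
  then show "invertible A"
    by (auto simp: det_map_matrix invertible_det_nz)
  have "rsquarefree (charpoly (map_matrix emb A))"
    using nz by (intro rsquarefree_if_det_sylvester_matrix_nonzero[OF e degree_charpoly_le])
      (simp add: genericity_poly_def)
  then show "simple_spectrum emb A"
    by (rule simple_spectrum_if_rsquarefree)
qed

lemma genericity_poly_nonzero:
  assumes e: "bij_betw e (UNIV::'n::finite set) {0..<CARD('n)}"
  shows "\<exists>M::'a^'n^'n. genericity_poly e M \<noteq> 0"
proof -
  define x where "x i = (of_nat (e i + 1) :: complex)" for i
  define M :: "'a^'n^'n" where "M = (\<chi> i j. if i = j then of_nat (e i + 1) else 0)"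
  have "inj x" using e by (auto simp: x_def inj_def bij_betw_def)
  have x_nonzero: "x i \<noteq> 0" for i by (simp only: x_def of_nat_eq_0_iff)
  have M: "map_matrix emb M = (\<chi> i j. if i = j then x i else 0)"
    by (simp add: vec_eq_iff M_def x_def hom_one)
  have charpoly: "charpoly (map_matrix emb M) = (\<Prod>i\<in>UNIV. [:- x i, 1:])"
    unfolding charpoly_def M by (subst det_diagonal) auto
  have "degree (\<Prod>i\<in>UNIV. [:- x i, 1:]) = CARD('n)"
    by (subst degree_prod_eq_sum_degree) auto
  then have "det (sylvester_matrix e (charpoly (map_matrix emb M))) \<noteq> 0"
    unfolding charpoly
    by (intro det_sylvester_matrix_nonzero_if_rsquarefree[OF e] rsquarefree_prod_linear \<open>inj x\<close>)
  moreover have "det (map_matrix emb M) \<noteq> 0"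
    unfolding M by (subst det_diagonal) (auto simp: x_nonzero)
  ultimately show ?thesis by (auto simp: genericity_poly_def)
qed

lemma open_dense_invertible_simple_spectrum:
  obtains S :: "('a^'n::finite^'n) set"
  where "open S" "closure S = UNIV" "\<And>X. X \<in> S \<Longrightarrow> invertible X \<and> simple_spectrum emb X"
proof -
  obtain e where e: "bij_betw e (UNIV::'n set) {0..<CARD('n)}"
    using ex_bij_betw_finite_nat[of "UNIV::'n set"] by auto
  define S :: "('a^'n^'n) set" where "S = {X. genericity_poly e X \<noteq> 0}"
  have "open S"
    unfolding S_def
    by (intro open_Collect_neq continuous_on_complex_polynomial_function
        complex_polynomial_function_genericity_poly continuous_on_const)
  moreover obtain M where "genericity_poly e M \<noteq> 0"
    using genericity_poly_nonzero[OF e] by blast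
  then have "closure S = UNIV"
    unfolding S_def
    by (rule dense_complex_polynomial_function_nonzero[OF complex_polynomial_function_genericity_poly])
  moreover have "invertible X \<and> simple_spectrum emb X" if "X \<in> S" for X
    using invertible_simple_spectrum_if_genericity_poly_nonzero[OF e] that by (simp add: S_def)
  ultimately show thesis by (rule that)
qed

end

section \<open>Perturbation inside GL\<close>

lemma matrix_norm_le:
  fixes N :: "'a::{real_normed_field, euclidean_space}^'n::finite^'n \<Rightarrow> real"
  assumes N: "is_matrix_norm N"
  obtains K where "K \<ge> 0" "\<And>X. N X \<le> K * norm X"
proof
  have N0: "N 0 = 0" and nonneg: "N X \<ge> 0" and triangle: "N (X + Y) \<le> N X + N Y" for X Y
    using N by (auto simp: is_matrix_norm_def)
  have scale: "N (c *\<^sub>R X) = \<bar>c\<bar> * N X" for c X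
  proof -
    have "c *\<^sub>R X = (\<chi> i j. of_real c * X $ i $ j)"
      by (simp add: vec_eq_iff of_real_def)
    then show ?thesis using N by (simp add: is_matrix_norm_def)
  qed
  have sum: "N (\<Sum>b\<in>B. f b) \<le> (\<Sum>b\<in>B. N (f b))" for f and B :: "'b set"
    by (induct B rule: infinite_finite_induct) (auto simp: N0 intro: order.trans[OF triangle])
  show "N X \<le> (\<Sum>b\<in>Basis. N b) * norm X" for X
  proof -
    have "N X = N (\<Sum>b\<in>Basis. (X \<bullet> b) *\<^sub>R b)" by (simp add: euclidean_representation)
    also have "\<dots> \<le> (\<Sum>b\<in>Basis. \<bar>X \<bullet> b\<bar> * N b)"
      using sum[of "\<lambda>b. (X \<bullet> b) *\<^sub>R b" Basis] by (simp add: scale)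
    also have "\<dots> \<le> (\<Sum>b\<in>Basis. norm X * N b)"
      by (intro sum_mono mult_right_mono Basis_le_norm nonneg)
    finally show ?thesis by (simp add: sum_distrib_left mult.commute)
  qed
  show "0 \<le> (\<Sum>b\<in>Basis. N b)" by (intro sum_nonneg nonneg)
qed

lemma matrix_norm_less_if_norm_less:
  fixes N :: "'a::{real_normed_field, euclidean_space}^'n::finite^'n \<Rightarrow> real"
  assumes "is_matrix_norm N" "\<epsilon> > 0"
  obtains r where "r > 0" "\<And>X. norm X < r \<Longrightarrow> N X < \<epsilon>"
proof -
  obtain K where K: "K \<ge> 0" "\<And>X. N X \<le> K * norm X"
    using matrix_norm_le[OF assms(1)] by blast
  show thesis
  proof (rule that)
    show "\<epsilon> / (K + 1) > 0" using K(1) assms(2) by simp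
    show "N X < \<epsilon>" if "norm X < \<epsilon> / (K + 1)" for X
    proof -
      have "N X \<le> (K + 1) * norm X"
        using K(2)[of X] norm_ge_zero[of X] unfolding distrib_right by linarith
      also have "\<dots> < \<epsilon>" using that K(1) by (simp add: field_simps)
      finally show ?thesis .
    qed
  qed
qed

lemma continuous_on_matrix_mult_right:
  "continuous_on S (\<lambda>X::'a::real_normed_field^'n::finite^'m::finite. X ** C)"
  unfolding matrix_matrix_mult_def
  by (intro continuous_on_vec_lambda continuous_on_sum continuous_on_mult continuous_on_const
      linear_continuous_on bounded_linear_compose[OF bounded_linear_vec_nth bounded_linear_vec_nth])

lemma continuous_on_matrix_mult_left:
  "continuous_on S (\<lambda>X::'a::real_normed_field^'n::finite^'m::finite. C ** X)"
  unfolding matrix_matrix_mult_def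
  by (intro continuous_on_vec_lambda continuous_on_sum continuous_on_mult continuous_on_const
      linear_continuous_on bounded_linear_compose[OF bounded_linear_vec_nth bounded_linear_vec_nth])

lemma dense_vimage_continuous_inverse:
  fixes h :: "'a::topological_space \<Rightarrow> 'b::topological_space"
  assumes "closure S = UNIV" "continuous_on UNIV h'" "\<And>x. h' (h x) = x" "\<And>y. h (h' y) = y"
  shows "closure (h -` S) = UNIV"
  unfolding closure_eq_UNIV_iff
proof (intro allI impI)
  fix W :: "'a set" assume "open W" "W \<noteq> {}"
  have "h ` W = h' -` W"
    using assms(3,4) by (auto simp: image_iff) (metis)
  then have "open (h ` W)"
    using \<open>open W\<close> assms(2) by (simp add: open_vimage)
  then have "h ` W \<inter> S \<noteq> {}"
    using assms(1) \<open>W \<noteq> {}\<close> by (simp add: closure_eq_UNIV_iff)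
  then show "W \<inter> h -` S \<noteq> {}" by blast
qed

lemma dense_vimage_matrix_mult:
  fixes S :: "('a::real_normed_field^'n::finite^'n) set"
  assumes "closure S = UNIV" "invertible C"
  shows "closure ((\<lambda>X. X ** C) -` S) = UNIV" "closure ((\<lambda>X. C ** X) -` S) = UNIV"
proof -
  obtain C' where C': "C ** C' = mat 1" "C' ** C = mat 1"
    using assms(2) invertible_def by blast
  show "closure ((\<lambda>X. X ** C) -` S) = UNIV"
    by (rule dense_vimage_continuous_inverse[OF assms(1) continuous_on_matrix_mult_right[of _ C']])
      (simp_all add: C' flip: matrix_mul_assoc)
  show "closure ((\<lambda>X. C ** X) -` S) = UNIV"
    by (rule dense_vimage_continuous_inverse[OF assms(1) continuous_on_matrix_mult_left[of _ C']])
      (simp_all add: C' matrix_mul_assoc)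
qed

lemma invertible_matrix_mult_iff:
  fixes A B :: "'a::field^'n::finite^'n"
  shows "invertible (A ** B) \<longleftrightarrow> invertible A \<and> invertible B"
  by (simp add: invertible_det_nz det_mul)

lemma open_on_GL_image_meets_dense:
  assumes "open_on_GL f" "open U" "U \<subseteq> GL" "U \<noteq> {}" "closure T = UNIV" "T \<subseteq> GL"
  obtains X where "X \<in> U" "f X \<in> T"
proof -
  have "openin (top_of_set GL) (f ` U)"
    using assms(1-3) by (simp add: open_on_GL_def open_subset)
  then obtain W where W: "open W" "f ` U = GL \<inter> W"
    by (auto simp: openin_open)
  then have "W \<noteq> {}" using assms(4) by blast
  then obtain Y where "Y \<in> W" "Y \<in> T"
    using assms(5) \<open>open W\<close> by (auto simp: closure_eq_UNIV_iff)
  then have "Y \<in> f ` U" using W assms(6) by blast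
  with \<open>Y \<in> T\<close> show thesis using that by blast
qed

lemma open_on_GL_product_meets_dense:
  fixes f g :: "'a::real_normed_field^'n::finite^'n \<Rightarrow> 'a^'n^'n"
  assumes "maps_GL f" "maps_GL g" "open_on_GL f \<or> open_on_GL g"
    and S: "closure S = UNIV" "S \<subseteq> GL"
    and U: "open U" "U \<subseteq> GL" "U \<noteq> {}" and V: "open V" "V \<subseteq> GL" "V \<noteq> {}"
  obtains X Y where "X \<in> U" "Y \<in> V" "f X ** g Y \<in> S"
  using assms(3)
proof
  assume "open_on_GL f"
  obtain Y where "Y \<in> V" using V by blast
  then have "invertible (g Y)"
    using assms(2) V by (auto simp: maps_GL_def GL_def)
  then have "closure ((\<lambda>X. X ** g Y) -` S) = UNIV" "(\<lambda>X. X ** g Y) -` S \<subseteq> GL"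
    using S dense_vimage_matrix_mult(1)[OF S(1)] by (auto simp: GL_def invertible_matrix_mult_iff)
  then obtain X where "X \<in> U" "f X ** g Y \<in> S"
    using open_on_GL_image_meets_dense[OF \<open>open_on_GL f\<close> U] by blast
  with \<open>Y \<in> V\<close> show thesis using that by blast
next
  assume "open_on_GL g"
  obtain X where "X \<in> U" using U by blast
  then have "invertible (f X)"
    using assms(1) U by (auto simp: maps_GL_def GL_def)
  then have "closure ((\<lambda>Y. f X ** Y) -` S) = UNIV" "(\<lambda>Y. f X ** Y) -` S \<subseteq> GL"
    using S dense_vimage_matrix_mult(2)[OF S(1)] by (auto simp: GL_def invertible_matrix_mult_iff)
  then obtain Y where "Y \<in> V" "f X ** g Y \<in> S"
    using open_on_GL_image_meets_dense[OF \<open>open_on_GL g\<close> V] by blast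
  with \<open>X \<in> U\<close> show thesis using that by blast
qed

theorem (in complex_embedding) simple_spectrum_approximation:
  fixes N :: "'a^'n::finite^'n \<Rightarrow> real" and f g :: "'a^'n^'n \<Rightarrow> 'a^'n^'n"
  assumes "is_matrix_norm N" "maps_GL f" "maps_GL g" "open_on_GL f \<or> open_on_GL g" "\<epsilon> > 0"
  shows "\<exists>Ae Be. invertible Ae \<and> invertible Be \<and>
           simple_spectrum emb Ae \<and> simple_spectrum emb Be \<and>
           N (A - Ae) < \<epsilon> \<and> N (B - Be) < \<epsilon> \<and> simple_spectrum emb (f Ae ** g Be)"
proof -
  obtain S :: "('a^'n^'n) set" where S: "open S" "closure S = UNIV"
    and generic: "\<And>X. X \<in> S \<Longrightarrow> invertible X \<and> simple_spectrum emb X"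
    using open_dense_invertible_simple_spectrum by blast
  have "S \<subseteq> GL" using generic by (auto simp: GL_def)
  obtain r where "r > 0" and close: "\<And>X. norm X < r \<Longrightarrow> N X < \<epsilon>"
    using matrix_norm_less_if_norm_less[OF assms(1,5)] by blast
  have "open (ball C r \<inter> S)" "ball C r \<inter> S \<subseteq> GL" "ball C r \<inter> S \<noteq> {}" for C
    using S \<open>S \<subseteq> GL\<close> \<open>r > 0\<close> by (auto simp: closure_eq_UNIV_iff)
  then obtain Ae Be where "Ae \<in> ball A r \<inter> S" "Be \<in> ball B r \<inter> S" "f Ae ** g Be \<in> S"
    using open_on_GL_product_meets_dense[OF assms(2-4) S(2) \<open>S \<subseteq> GL\<close>] by metis
  then show ?thesis using generic close by (auto simp: dist_norm)
qed

theorem proposition1: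
  shows "(\<forall>(N :: real^'n^'n \<Rightarrow> real) f g A B \<epsilon>.
            is_matrix_norm N \<and> maps_GL f \<and> maps_GL g \<and>
            (open_on_GL f \<or> open_on_GL g) \<and> \<epsilon> > 0 \<longrightarrow>
            (\<exists>Ae Be. invertible Ae \<and> invertible Be \<and>
               simple_spectrum complex_of_real Ae \<and> simple_spectrum complex_of_real Be \<and>
               N (A - Ae) < \<epsilon> \<and> N (B - Be) < \<epsilon> \<and>
               simple_spectrum complex_of_real (f Ae ** g Be)))
       \<and>
         (\<forall>(N :: complex^'n^'n \<Rightarrow> real) f g A B \<epsilon>.
            is_matrix_norm N \<and> maps_GL f \<and> maps_GL g \<and>
            (open_on_GL f \<or> open_on_GL g) \<and> \<epsilon> > 0 \<longrightarrow>
            (\<exists>Ae Be. invertible Ae \<and> invertible Be \<and>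
               simple_spectrum id Ae \<and> simple_spectrum id Be \<and>
               N (A - Ae) < \<epsilon> \<and> N (B - Be) < \<epsilon> \<and>
               simple_spectrum id (f Ae ** g Be)))"
proof -
  interpret real: complex_embedding complex_of_real
    by (rule complex_embedding.intro) (simp_all add: bounded_linear_of_real)
  interpret complex: complex_embedding "id :: complex \<Rightarrow> complex"
    by (rule complex_embedding.intro) (simp_all add: id_def bounded_linear_ident)
  show ?thesis
    using real.simple_spectrum_approximation complex.simple_spectrum_approximation by blast
qed

end
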